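(* Let $U\subset\mathbb{R}^n$ be a bounded domain and let $V$ be an open set with $\overline V\subset U$. Let $(u_1,u_2)$ be a viscosity supersolution of the system (S) in $U$. Assume there is $x_0\in\partial V$ such that $u_1(x_0)\le u_i(x)$ for all $x\in U$ and $i=1,2$ (i.e. $u_1(x_0)=\min_{i=1,2}\min_{U}u_i$), and $u_1(x_0)<u_i(x)$ for all $x\in V$ and $i=1,2$. Assume further that $V$ satisfies the interior ball condition at $x_0$: there is an open ball $B=B(\bar x,R)\subset V$ with $x_0\in\partial B$. Let $\nu(x_0)=(x_0-\bar x)/|x_0-\bar x|$ be the outward unit normal at $x_0$. Then $$\liminf_{s\to0^+}\frac{u_1(x_0-s\nu(x_0))-u_1(x_0)}{s}>0.$$
   Context: For $\varphi\in C^2$ near $x$, set $\Delta_\infty\varphi(x)=|D\varphi(x)|^{-2}\sum_{k,l=1}^n\varphi_{x_k}\varphi_{x_l}\varphi_{x_kx_l}(x)$ when $D\varphi(x)\neq0$. Define $\Delta_\infty^+\varphi(x)=\Delta_\infty\varphi(x)$ if $D\varphi(x)\ne0$ and $\Delta_\infty^+\varphi(x)=\max\{D^2\varphi(x)v\cdot v: v\in\mathbb{S}^{n-1}\}$ if $D\varphi(x)=0$; define $\Delta_\infty^-\varphi(x)$ in the same way with $\min$ in place of $\max$. The system (S) on an open set $\Omega$ is: $-\Delta_\infty u_1+u_1-u_2=0$ and $-\Delta_\infty u_2+u_2-u_1=0$ in $\Omega$. A pair $(u_1,u_2)$ of upper semicontinuous functions on $\Omega$ is a viscosity subsolution of (S)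 in $\Omega$ if for each $i\in\{1,2\}$, $j=3-i$, and each $\varphi\in C^2(\Omega)$ such that $u_i-\varphi$ has a local maximum at $x_0\in\Omega$, one has $-\Delta_\infty^+\varphi(x_0)+u_i(x_0)-u_j(x_0)\le0$. A pair of lower semicontinuous functions on $\Omega$ is a viscosity supersolution if for each $i$, $j=3-i$, and each $\varphi\in C^2(\Omega)$ such that $u_i-\varphi$ has a local minimum at $x_0\in\Omega$, one has $-\Delta_\infty^-\varphi(x_0)+u_i(x_0)-u_j(x_0)\ge0$. A viscosity solution is a pair that is both a subsolution and a supersolution. *)

theory Defs
  imports "HOL-Analysis.Analysis"
begin

definition lsc_on :: "('a::topological_space) set \<Rightarrow> ('a \<Rightarrow> real) \<Rightarrow> bool" where
  "lsc_on S u \<longleftrightarrow> (\<forall>x\<in>S. \<forall>t. t < u x \<longrightarrow> eventually (\<lambda>y. t < u y) (at x within S))"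

definition C2_with :: "(real^'n) set \<Rightarrow> (real^'n \<Rightarrow> real) \<Rightarrow> (real^'n \<Rightarrow> real^'n)
    \<Rightarrow> (real^'n \<Rightarrow> real^'n^'n) \<Rightarrow> bool" where
  "C2_with \<Omega> \<phi> g H \<longleftrightarrow>
     (\<forall>x\<in>\<Omega>. (\<phi> has_derivative (\<lambda>h. g x \<bullet> h)) (at x)) \<and>
     (\<forall>x\<in>\<Omega>. (g has_derivative (\<lambda>h. H x *v h)) (at x)) \<and>
     continuous_on \<Omega> H"

definition inf_lap_minus :: "real^'n \<Rightarrow> real^'n^'n \<Rightarrow> real" where
  "inf_lap_minus p X =
     (if p \<noteq> 0 then (p \<bullet> (X *v p)) / (norm p)^2
      else Inf {(X *v v) \<bullet> v | v. norm v = 1})"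

definition super_component :: "(real^'n) set \<Rightarrow> (real^'n \<Rightarrow> real) \<Rightarrow> (real^'n \<Rightarrow> real) \<Rightarrow> bool" where
  "super_component \<Omega> ui uj \<longleftrightarrow>
     (\<forall>\<phi> g H x0. C2_with \<Omega> \<phi> g H \<and> x0 \<in> \<Omega> \<and>
        (\<exists>e>0. \<forall>y\<in>\<Omega> \<inter> ball x0 e. ui y - \<phi> y \<ge> ui x0 - \<phi> x0) \<longrightarrow>
        - inf_lap_minus (g x0) (H x0) + ui x0 - uj x0 \<ge> 0)"

definition visc_supersol_S :: "(real^'n) set \<Rightarrow> (real^'n \<Rightarrow> real) \<Rightarrow> (real^'n \<Rightarrow> real) \<Rightarrow> bool" where
  "visc_supersol_S \<Omega> u1 u2 \<longleftrightarrow>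
     lsc_on \<Omega> u1 \<and> lsc_on \<Omega> u2 \<and>
     super_component \<Omega> u1 u2 \<and> super_component \<Omega> u2 u1"

end

theory Submission
  imports Defs
begin

(* Let m = u1(x0) be the minimum of u1, u2 over U, and B = ball xbar R the interior ball at x0.
   The proof compares u1 with the radial Gaussian barrier
       phi(x) = m + delta * (exp(-alpha |x - xbar|^2) - exp(-alpha R^2))
   on the closed annulus K = {R/2 <= |x - xbar| <= R}:
   - phi = m <= u1 on the outer sphere, and phi <= m + delta <= u1 on the inner sphere, where
     delta > 0 is the gap of the lower semicontinuous u1 above m on the compact inner sphere;
   - for alpha >= max 1 (4/R^2) the barrier is a strict classical subsolution in K, so it cannot
     touch the supersolution u1 from below at an interior point.
   Hence phi <= u1 on K.  Since phi grows linearly when entering B from x0, the difference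
   quotients of u1 along the inward normal are bounded below by a positive constant. *)

lemma lsc_on_diff_continuous:
  assumes "lsc_on U u" "continuous_on U \<phi>"
  shows "lsc_on U (\<lambda>x. u x - \<phi> x)"
  unfolding lsc_on_def
proof (intro ballI allI impI)
  fix x t assume x: "x \<in> U" and t: "t < u x - \<phi> x"
  define e where "e = u x - \<phi> x - t"
  have e: "e > 0" using t by (simp add: e_def)
  have u_near: "eventually (\<lambda>y. u x - e/2 < u y) (at x within U)"
    using assms(1) x e unfolding lsc_on_def by auto
  have "(\<phi> \<longlongrightarrow> \<phi> x) (at x within U)"
    using assms(2) x by (simp add: continuous_on_def)
  then have \<phi>_near: "eventually (\<lambda>y. \<phi> y < \<phi> x + e/2) (at x within U)"
    using e by (intro order_tendstoD(2)) auto
  show "eventually (\<lambda>y. t < u y - \<phi> y) (at x within U)"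
    using eventually_conj[OF u_near \<phi>_near] by eventually_elim (simp add: e_def field_simps)
qed

text \<open>If no point were minimal, each point would be beaten by another one, and a finite
  subcover of the neighbourhoods where f stays above these intermediate values gives a
  contradiction at the index with the smallest intermediate value.\<close>
lemma lsc_attains_min:
  assumes lsc: "lsc_on U f" and K: "compact K" "K \<subseteq> U" "K \<noteq> {}"
  shows "\<exists>z\<in>K. \<forall>y\<in>K. f z \<le> f y"
proof (rule ccontr)
  assume "\<not> ?thesis"
  then have "\<forall>x\<in>K. \<exists>y\<in>K. f y < f x" by (auto simp: not_le)
  then obtain better where better: "\<And>x. x \<in> K \<Longrightarrow> better x \<in> K \<and> f (better x) < f x"
    by metis
  define t where "t x = (f (better x) + f x) / 2" for x
  have "\<exists>N. open N \<and> x \<in> N \<and> (\<forall>z\<in>N. z \<in> U \<longrightarrow> t x < f z)" if x: "x \<in> K" for x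
  proof -
    have tx: "t x < f x" using better[OF x] by (simp add: t_def)
    then have "eventually (\<lambda>y. t x < f y) (at x within U)"
      using lsc x K(2) unfolding lsc_on_def by auto
    then obtain S where "open S" "x \<in> S" "\<forall>z\<in>S. z \<noteq> x \<longrightarrow> z \<in> U \<longrightarrow> t x < f z"
      unfolding eventually_at_topological by blast
    then show ?thesis using tx by (intro exI[of _ S]) auto
  qed
  then obtain N where N: "\<And>x. x \<in> K \<Longrightarrow> open (N x) \<and> x \<in> N x \<and> (\<forall>z\<in>N x. z \<in> U \<longrightarrow> t x < f z)"
    by metis
  obtain D where D: "D \<subseteq> K" "finite D" "K \<subseteq> (\<Union>x\<in>D. N x)"
    using compactE_image[OF K(1), of K N] N by blast
  then have "D \<noteq> {}" using K(3) by blast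
  then have "Min (t ` D) \<in> t ` D" using D(2) by (intro Min_in) auto
  then obtain x where x: "x \<in> D" "t x = Min (t ` D)" by auto
  have xK: "x \<in> K" using x D by blast
  then obtain x' where x': "x' \<in> D" "better x \<in> N x'" using D(3) better by blast
  have "t x' < f (better x)" using N[of x'] x' D K(2) better[OF xK] by blast
  moreover have "f (better x) < t x" using better[OF xK] by (simp add: t_def)
  moreover have "t x \<le> t x'" using x x' D(2) by simp
  ultimately show False by simp
qed

lemma lsc_uniform_gap:
  assumes "lsc_on U f" "compact K" "K \<subseteq> U" "K \<noteq> {}" "\<forall>y\<in>K. m < f y"
  shows "\<exists>\<delta>>0. \<forall>y\<in>K. m + \<delta> \<le> f y"
proof -
  obtain z where "z \<in> K" "\<forall>y\<in>K. f z \<le> f y" using lsc_attains_min assms(1-4) by blast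
  then show ?thesis using assms(5) by (intro exI[of _ "f z - m"]) auto
qed

section \<open>The Gaussian barrier\<close>

definition gauss :: "real \<Rightarrow> real^'n \<Rightarrow> real^'n \<Rightarrow> real" where
  "gauss \<alpha> xbar x = exp (- \<alpha> * ((x - xbar) \<bullet> (x - xbar)))"

definition barrier :: "real^'n \<Rightarrow> real \<Rightarrow> real \<Rightarrow> real \<Rightarrow> real \<Rightarrow> real^'n \<Rightarrow> real" where
  "barrier xbar R \<alpha> m \<delta> x = m + \<delta> * (gauss \<alpha> xbar x - exp (- \<alpha> * R\<^sup>2))"

definition barrier_grad :: "real^'n \<Rightarrow> real \<Rightarrow> real \<Rightarrow> real^'n \<Rightarrow> real^'n" where
  "barrier_grad xbar \<alpha> \<delta> x = (- 2 * \<alpha> * \<delta> * gauss \<alpha> xbar x) *\<^sub>R (x - xbar)"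

definition barrier_hess :: "real^'n \<Rightarrow> real \<Rightarrow> real \<Rightarrow> real^'n \<Rightarrow> real^'n^'n" where
  "barrier_hess xbar \<alpha> \<delta> x =
     (\<chi> i j. (- 2 * \<alpha> * \<delta> * gauss \<alpha> xbar x) *
              ((if i = j then 1 else 0) - 2 * \<alpha> * ((x - xbar)$i * (x - xbar)$j)))"

lemma gauss_norm: "gauss \<alpha> xbar x = exp (- \<alpha> * (norm (x - xbar))\<^sup>2)"
  by (simp add: gauss_def power2_norm_eq_inner)

lemma scaled_identity_minus_outer_mult:
  fixes d h :: "real^'n"
  shows "(\<chi> i j. c * ((if i = j then 1 else 0) - a * (d$i * d$j))) *v h
       = c *\<^sub>R (h - (a * (d \<bullet> h)) *\<^sub>R d)"
proof -
  have "(\<Sum>j\<in>UNIV. c * ((if i = j then 1 else 0) - a * (d$i * d$j)) * h$j)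
      = (\<Sum>j\<in>UNIV. (if i = j then c * h$j else 0)) - (\<Sum>j\<in>UNIV. (c*a*d$i) * (d$j * h$j))" for i
    by (subst sum_subtractf[symmetric]) (rule sum.cong, auto simp: algebra_simps)
  also have "\<dots>i = c * h$i - (c*a*d$i) * (\<Sum>j\<in>UNIV. d$j * h$j)" for i
    by (simp add: sum_distrib_left)
  finally show ?thesis
    by (simp add: vec_eq_iff matrix_vector_mult_def inner_vec_def algebra_simps)
qed

lemma barrier_hess_mult:
  "barrier_hess xbar \<alpha> \<delta> x *v h
     = (- 2 * \<alpha> * \<delta> * gauss \<alpha> xbar x) *\<^sub>R (h - (2 * \<alpha> * ((x - xbar) \<bullet> h)) *\<^sub>R (x - xbar))"
  unfolding barrier_hess_def by (rule scaled_identity_minus_outer_mult)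

lemma barrier_C2: "C2_with \<Omega> (barrier xbar R \<alpha> m \<delta>) (barrier_grad xbar \<alpha> \<delta>) (barrier_hess xbar \<alpha> \<delta>)"
  unfolding C2_with_def
proof (intro conjI ballI)
  fix x
  show "(barrier xbar R \<alpha> m \<delta> has_derivative (\<lambda>h. barrier_grad xbar \<alpha> \<delta> x \<bullet> h)) (at x)"
    unfolding barrier_def barrier_grad_def gauss_def
    by (auto intro!: derivative_eq_intros simp: algebra_simps inner_commute)
  show "(barrier_grad xbar \<alpha> \<delta> has_derivative (\<lambda>h. barrier_hess xbar \<alpha> \<delta> x *v h)) (at x)"
    unfolding barrier_hess_mult barrier_grad_def gauss_def
    by (auto intro!: derivative_eq_intros simp: algebra_simps inner_commute)
next
  show "continuous_on \<Omega> (barrier_hess xbar \<alpha> \<delta>)"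
    unfolding barrier_hess_def gauss_def by (intro continuous_intros)
qed

lemma continuous_on_barrier: "continuous_on \<Omega> (barrier xbar R \<alpha> m \<delta>)"
  unfolding barrier_def gauss_def by (intro continuous_intros)

section \<open>The barrier is a strict subsolution away from its centre\<close>

lemma inf_lap_minus_radial:
  fixes d :: "real^'n"
  assumes "c \<noteq> 0" "d \<noteq> 0" and X: "\<And>h. X *v h = c *\<^sub>R (h - (a * (d \<bullet> h)) *\<^sub>R d)"
  shows "inf_lap_minus (c *\<^sub>R d) X = c * (1 - a * (d \<bullet> d))"
proof -
  have num: "(c *\<^sub>R d) \<bullet> (X *v (c *\<^sub>R d)) = (c * c * (d \<bullet> d)) * (c * (1 - a * (d \<bullet> d)))"
    unfolding X by (simp add: algebra_simps)
  have den: "(norm (c *\<^sub>R d))\<^sup>2 = c * c * (d \<bullet> d)"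
    unfolding power2_norm_eq_inner by (simp add: algebra_simps)
  have "c * c * (d \<bullet> d) \<noteq> 0" using assms(1,2) by simp
  moreover have "c *\<^sub>R d \<noteq> 0" using assms(1,2) by simp
  ultimately show ?thesis unfolding inf_lap_minus_def num den by simp
qed

lemma barrier_inf_lap_large:
  assumes "\<alpha> \<ge> 1" "\<delta> > 0" "\<alpha> * (norm (x - xbar))\<^sup>2 \<ge> 1"
  shows "inf_lap_minus (barrier_grad xbar \<alpha> \<delta> x) (barrier_hess xbar \<alpha> \<delta> x) > \<delta> * gauss \<alpha> xbar x"
proof -
  define q where "q = (x - xbar) \<bullet> (x - xbar)"
  define E where "E = gauss \<alpha> xbar x"
  have aq: "\<alpha> * q \<ge> 1" using assms(3) by (simp add: q_def power2_norm_eq_inner)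
  have E: "E > 0" by (simp add: E_def gauss_def)
  have "x - xbar \<noteq> 0" using aq by (auto simp: q_def)
  moreover have "- 2 * \<alpha> * \<delta> * E \<noteq> 0" using assms(1,2) E by simp
  ultimately have lap: "inf_lap_minus (barrier_grad xbar \<alpha> \<delta> x) (barrier_hess xbar \<alpha> \<delta> x)
      = (\<delta> * E) * (2 * \<alpha> * (2 * \<alpha> * q - 1))"
    unfolding barrier_grad_def E_def
    by (subst inf_lap_minus_radial[OF _ _ barrier_hess_mult]) (auto simp: q_def algebra_simps)
  have "2 * 1 \<le> (2 * \<alpha>) * (2 * \<alpha> * q - 1)" using assms(1) aq by (intro mult_mono) auto
  then have "(\<delta> * E) * 1 < (\<delta> * E) * (2 * \<alpha> * (2 * \<alpha> * q - 1))"
    using assms(2) E by (intro mult_strict_left_mono) auto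
  then show ?thesis by (simp add: lap E_def)
qed

lemma barrier_below_at_local_min:
  assumes super: "super_component U u1 u2" and z: "z \<in> U"
    and locmin: "\<exists>e>0. \<forall>y\<in>U \<inter> ball z e.
                   u1 y - barrier xbar R \<alpha> m \<delta> y \<ge> u1 z - barrier xbar R \<alpha> m \<delta> z"
    and "\<alpha> \<ge> 1" "\<delta> > 0" "\<alpha> * (norm (z - xbar))\<^sup>2 \<ge> 1" and "m \<le> u2 z"
  shows "barrier xbar R \<alpha> m \<delta> z < u1 z"
proof -
  have "inf_lap_minus (barrier_grad xbar \<alpha> \<delta> z) (barrier_hess xbar \<alpha> \<delta> z) \<le> u1 z - u2 z"
    using super z locmin barrier_C2 unfolding super_component_def by fastforce
  then have "m + \<delta> * gauss \<alpha> xbar z < u1 z"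
    using barrier_inf_lap_large[OF assms(4-6)] \<open>m \<le> u2 z\<close> by linarith
  moreover have "barrier xbar R \<alpha> m \<delta> z \<le> m + \<delta> * gauss \<alpha> xbar z"
    using \<open>\<delta> > 0\<close> by (simp add: barrier_def)
  ultimately show ?thesis by linarith
qed

section \<open>Comparison on the annulus\<close>

lemma open_annulus_neighbourhood:
  fixes xbar z :: "'a::metric_space"
  assumes "r < dist xbar z" "dist xbar z < R"
  shows "\<exists>e>0. ball z e \<subseteq> cball xbar R - ball xbar r"
proof -
  have "open {x. r < dist xbar x \<and> dist xbar x < R}"
    by (intro open_Collect_conj open_Collect_less continuous_intros)
  then obtain e where "e > 0" "ball z e \<subseteq> {x. r < dist xbar x \<and> dist xbar x < R}"
    using assms open_contains_ball by blast
  then show ?thesis by (intro exI[of _ e]) auto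
qed

text \<open>If u1 dominates the barrier on both boundary spheres of the annulus r <= |x - xbar| <= R
  and the barrier is a strict subsolution there, then u1 dominates it on the whole annulus:
  otherwise the negative minimum of u1 - barrier would be attained at an interior point.\<close>
lemma barrier_below_on_annulus:
  assumes super: "super_component U u1 u2" and lsc: "lsc_on U u1"
    and K: "K = cball xbar R - ball xbar r" "K \<subseteq> U" "0 < r" "r < R"
    and "\<alpha> \<ge> 1" "\<alpha> * r\<^sup>2 \<ge> 1" "\<delta> > 0"
    and u2_ge: "\<forall>y\<in>K. m \<le> u2 y"
    and outer: "\<forall>y\<in>sphere xbar R. m \<le> u1 y"
    and inner: "\<forall>y\<in>sphere xbar r. m + \<delta> \<le> u1 y"
  shows "\<forall>y\<in>K. barrier xbar R \<alpha> m \<delta> y \<le> u1 y"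
proof (rule ccontr)
  let ?\<phi> = "barrier xbar R \<alpha> m \<delta>"
  assume "\<not> ?thesis"
  then obtain y where y: "y \<in> K" "u1 y - ?\<phi> y < 0" by auto
  have "compact K" unfolding K(1) by (intro compact_diff) auto
  then obtain z where z: "z \<in> K" "\<forall>y\<in>K. u1 z - ?\<phi> z \<le> u1 y - ?\<phi> y"
    using lsc_attains_min[OF lsc_on_diff_continuous[OF lsc continuous_on_barrier]] K(2) y
    by blast
  have neg: "u1 z < ?\<phi> z" using z y by force
  have "dist xbar z \<noteq> R"
  proof
    assume "dist xbar z = R"
    then have "?\<phi> z = m" by (simp add: barrier_def gauss_norm dist_norm norm_minus_commute)
    then show False using outer neg \<open>dist xbar z = R\<close> by force
  qed
  moreover have "dist xbar z \<noteq> r"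
  proof
    assume "dist xbar z = r"
    have "?\<phi> z \<le> m + \<delta> * gauss \<alpha> xbar z" using \<open>\<delta> > 0\<close> by (simp add: barrier_def)
    also have "\<dots> \<le> m + \<delta>"
      using \<open>\<alpha> \<ge> 1\<close> \<open>\<delta> > 0\<close> by (simp add: gauss_norm mult_left_le)
    finally have "?\<phi> z \<le> m + \<delta>" .
    then show False using inner neg \<open>dist xbar z = r\<close> by force
  qed
  ultimately have z_open: "r < dist xbar z" "dist xbar z < R"
    using z(1) K(1) by auto
  then obtain e where "e > 0" "ball z e \<subseteq> K"
    using open_annulus_neighbourhood K(1) by blast
  then have locmin: "\<exists>e>0. \<forall>y\<in>U \<inter> ball z e. u1 y - ?\<phi> y \<ge> u1 z - ?\<phi> z"
    using \<open>e > 0\<close> z(2) by blast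
  have "r\<^sup>2 \<le> (norm (z - xbar))\<^sup>2"
    using z_open(1) K(3) by (intro power_mono) (auto simp: dist_norm norm_minus_commute)
  then have "\<alpha> * (norm (z - xbar))\<^sup>2 \<ge> 1"
    using \<open>\<alpha> * r\<^sup>2 \<ge> 1\<close> \<open>\<alpha> \<ge> 1\<close> by (smt (verit) mult_left_mono)
  then have "?\<phi> z < u1 z"
    using barrier_below_at_local_min[OF super _ locmin] assms(7,9) u2_ge z(1) K(2) by blast
  then show False using neg by simp
qed

section \<open>Linear growth of the barrier at the outer sphere\<close>

text \<open>Entering the ball by s from the sphere of radius R, the barrier grows at least linearly:
  exp(alpha (2Rs - s^2)) >= 1 + alpha R s for 0 <= s <= R.\<close>
lemma barrier_linear_growth:
  assumes "norm (y - xbar) = R - s" "0 \<le> s" "s \<le> R" "\<alpha> \<ge> 0" "\<delta> \<ge> 0"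
  shows "\<delta> * exp (- \<alpha> * R\<^sup>2) * \<alpha> * R * s \<le> barrier xbar R \<alpha> m \<delta> y - m"
proof -
  define e0 where "e0 = exp (- \<alpha> * R\<^sup>2)"
  have gy: "gauss \<alpha> xbar y = e0 * exp (\<alpha> * (2 * R * s - s\<^sup>2))"
    unfolding gauss_norm assms(1) e0_def mult_exp_exp by (simp add: power2_eq_square algebra_simps)
  have "\<alpha> * (R * s) \<le> \<alpha> * (2 * R * s - s\<^sup>2)"
    using assms(2-4) by (intro mult_left_mono) (auto simp: power2_eq_square mult_right_mono)
  then have "1 + \<alpha> * R * s \<le> exp (\<alpha> * (2 * R * s - s\<^sup>2))"
    using exp_ge_add_one_self[of "\<alpha> * (2 * R * s - s\<^sup>2)"] by (simp add: algebra_simps)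
  then have "e0 * (1 + \<alpha> * R * s) \<le> e0 * exp (\<alpha> * (2 * R * s - s\<^sup>2))"
    by (rule mult_left_mono) (simp add: e0_def)
  then have "e0 * (\<alpha> * R * s) \<le> gauss \<alpha> xbar y - e0"
    by (simp add: gy algebra_simps)
  then have "\<delta> * (e0 * (\<alpha> * R * s)) \<le> \<delta> * (gauss \<alpha> xbar y - e0)"
    using assms(5) by (rule mult_left_mono)
  then show ?thesis by (simp add: barrier_def e0_def mult.assoc)
qed

lemma dist_along_inward_normal:
  fixes x0 xbar :: "real^'n"
  assumes "norm (x0 - xbar) = R" "R > 0" "0 \<le> s" "s \<le> R"
  shows "norm ((x0 - s *\<^sub>R ((1 / norm (x0 - xbar)) *\<^sub>R (x0 - xbar))) - xbar) = R - s"
proof -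
  have "(x0 - s *\<^sub>R ((1 / norm (x0 - xbar)) *\<^sub>R (x0 - xbar))) - xbar = (1 - s / R) *\<^sub>R (x0 - xbar)"
    using assms(1,2) by (simp add: algebra_simps)
  moreover have "\<bar>1 - s / R\<bar> * R = R - s" using assms(2-4) by (simp add: field_simps)
  ultimately show ?thesis using assms(1) by simp
qed

lemma normal_quotient_bound:
  fixes x0 xbar :: "real^'n"
  assumes "norm (x0 - xbar) = R" "R > 0" "\<alpha> \<ge> 0" "\<delta> \<ge> 0" "0 < s" "s \<le> R/2"
    and below: "\<forall>y\<in>cball xbar R - ball xbar (R/2). barrier xbar R \<alpha> m \<delta> y \<le> u y"
  shows "\<delta> * exp (- \<alpha> * R\<^sup>2) * \<alpha> * R
           \<le> (u (x0 - s *\<^sub>R ((1 / norm (x0 - xbar)) *\<^sub>R (x0 - xbar))) - m) / s"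
proof -
  let ?y = "x0 - s *\<^sub>R ((1 / norm (x0 - xbar)) *\<^sub>R (x0 - xbar))"
  have dist_y: "norm (?y - xbar) = R - s"
    using dist_along_inward_normal[OF assms(1,2)] assms(5,6) by simp
  then have "?y \<in> cball xbar R - ball xbar (R/2)"
    using assms(5,6) by (simp add: dist_norm norm_minus_commute)
  then have "barrier xbar R \<alpha> m \<delta> ?y \<le> u ?y" using below by blast
  moreover have "\<delta> * exp (- \<alpha> * R\<^sup>2) * \<alpha> * R * s \<le> barrier xbar R \<alpha> m \<delta> ?y - m"
    by (rule barrier_linear_growth[OF dist_y]) (use assms(2-6) in auto)
  ultimately show ?thesis using assms(5) by (simp add: pos_le_divide_eq)
qed

lemma Liminf_pos_of_eventually_ge:
  fixes f :: "'a \<Rightarrow> real"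
  assumes "c > 0" "eventually (\<lambda>s. c \<le> f s) F"
  shows "Liminf F (\<lambda>s. ereal (f s)) > 0"
proof -
  have "ereal c \<le> Liminf F (\<lambda>s. ereal (f s))"
    using assms(2) by (intro Liminf_bounded) simp
  then show ?thesis using assms(1) by (meson ereal_less(2) less_le_trans)
qed

text \<open>Only the supersolution property of the first component,
  the minimality of u1(x0), and the interior ball are used.\<close>
theorem mainTheorem1:
  fixes U V :: "(real^'n) set" and u1 u2 :: "real^'n \<Rightarrow> real"
    and x0 xbar :: "real^'n" and R :: real
  assumes "open U" and "connected U" and "bounded U"
    and "open V" and "closure V \<subseteq> U"
    and "visc_supersol_S U u1 u2"
    and "x0 \<in> frontier V"
    and "\<forall>x\<in>U. u1 x0 \<le> u1 x \<and> u1 x0 \<le> u2 x"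
    and "\<forall>x\<in>V. u1 x0 < u1 x \<and> u1 x0 < u2 x"
    and "R > 0" and "ball xbar R \<subseteq> V" and "x0 \<in> frontier (ball xbar R)"
  shows "Liminf (at_right 0)
           (\<lambda>s::real. ereal ((u1 (x0 - s *\<^sub>R ((1 / norm (x0 - xbar)) *\<^sub>R (x0 - xbar))) - u1 x0) / s))
         > 0"
proof -
  let ?m = "u1 x0"
  have lsc: "lsc_on U u1" and super: "super_component U u1 u2"
    using assms(6) unfolding visc_supersol_S_def by auto
  have cball_U: "cball xbar R \<subseteq> U"
    using closure_mono[OF assms(11)] assms(5,10) by simp
  have nx0: "norm (x0 - xbar) = R"
    using assms(10,12) by (simp add: dist_norm norm_minus_commute)
  have sphere_V: "sphere xbar (R/2) \<subseteq> V" using assms(10,11) by auto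
  moreover have "sphere xbar (R/2) \<subseteq> U" using sphere_V closure_subset assms(5) by blast
  moreover have "sphere xbar (R/2) \<noteq> {}" using assms(10) by simp
  ultimately obtain \<delta> where "\<delta> > 0" and inner: "\<forall>y\<in>sphere xbar (R/2). ?m + \<delta> \<le> u1 y"
    using lsc_uniform_gap[OF lsc compact_sphere] assms(9) by blast
  define \<alpha> where "\<alpha> = max 1 (4 / R\<^sup>2)"
  have "4 / R\<^sup>2 * (R/2)\<^sup>2 = 1" using assms(10) by (simp add: power_divide)
  then have "\<alpha> \<ge> 1" "\<alpha> * (R/2)\<^sup>2 \<ge> 1"
    using mult_right_mono[of "4 / R\<^sup>2" \<alpha> "(R/2)\<^sup>2"] by (auto simp: \<alpha>_def)
  then have below: "\<forall>y\<in>cball xbar R - ball xbar (R/2). barrier xbar R \<alpha> ?m \<delta> y \<le> u1 y"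
    by (intro barrier_below_on_annulus[OF super lsc refl])
      (use cball_U inner \<open>\<delta> > 0\<close> assms(8,10) in auto)
  have "eventually (\<lambda>s. \<delta> * exp (- \<alpha> * R\<^sup>2) * \<alpha> * R
           \<le> (u1 (x0 - s *\<^sub>R ((1 / norm (x0 - xbar)) *\<^sub>R (x0 - xbar))) - u1 x0) / s) (at_right 0)"
    using normal_quotient_bound[OF nx0 assms(10) _ _ _ _ below] \<open>\<alpha> \<ge> 1\<close> \<open>\<delta> > 0\<close> assms(10)
    by (intro eventually_at_rightI[of 0 "R/2"]) auto
  moreover have "\<delta> * exp (- \<alpha> * R\<^sup>2) * \<alpha> * R > 0" using \<open>\<delta> > 0\<close> \<open>\<alpha> \<ge> 1\<close> assms(10) by simp
  ultimately show ?thesis by (rule Liminf_pos_of_eventually_ge[rotated])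
qed

end
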